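(* Let $\mathcal{C}_0=\prod_{i=1}^d[a_i,b_i]$ and let $f\in C^1(\mathcal{C}_0)$ have gradient $g$ Lipschitz on $\mathcal{C}_0$ with constant $L_2\ge0$ (no unconstrainedness assumption). Let $\mathcal{C}=\prod_{i=1}^d[c_i,d_i]\subseteq\mathcal{C}_0$ satisfy $d_i-c_i<b_i-a_i$ for all $i$, and define $\mathbf{x}(\mathcal{C})\in\mathcal{C}$ by $$\mathbf{x}_i(\mathcal{C})=\begin{cases}c_i & c_i=a_i,\\ d_i & d_i=b_i,\\ \frac{c_i+d_i}{2} & \text{otherwise.}\end{cases}$$ If $\mathcal{C}$ contains a point $x_*$ with $f(x_* )=f_*:=\min_{\mathcal{C}_0}f$, then $g(x_* )^T(\mathbf{x}(\mathcal{C})-x_* )=0$ and $$f_*\ \ge\ f(\mathbf{x}(\mathcal{C}))-\frac{L_2}{2}\sum_{i=1}^d\max\{(\mathbf{x}_i(\mathcal{C})-c_i)^2,(\mathbf{x}_i(\mathcal{C})-d_i)^2\}.$$ Consequently, the rule assigning this right-hand side to such cubes, and $-\infty$ to cubes not satisfying $d_i-c_i<b_i-a_i$ for all $i$, is a quasi-lower bound rule for minimizing $f$ over $\mathcal{C}_0$.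
   Context: $f\in C^1(\mathcal{C}_0)$ means $f$ is differentiable on an open set containing $\mathcal{C}_0$. For a subcube $\mathcal{C}$, $f_*(\mathcal{C})=\min_\mathcal{C}f$. A map $\mathbf{qlb}$ from subcubes of $\mathcal{C}_0$ to $[-\infty,\infty]$ is a quasi-lower bound rule if $\mathbf{qlb}(\mathcal{C})\le f_*(\mathcal{C})$ for every subcube $\mathcal{C}$ with $f_*(\mathcal{C})=f_*$. *)

theory Defs
  imports "HOL-Analysis.Analysis"
begin

definition is_subcube :: "real^'n \<Rightarrow> real^'n \<Rightarrow> real^'n \<Rightarrow> real^'n \<Rightarrow> bool" where
  "is_subcube a b c d \<longleftrightarrow> (\<forall>i. a$i \<le> c$i \<and> c$i \<le> d$i \<and> d$i \<le> b$i)"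

definition fmin :: "(real^'n \<Rightarrow> real) \<Rightarrow> real^'n \<Rightarrow> real^'n \<Rightarrow> real" where
  "fmin f c d = Inf (f ` cbox c d)"

definition is_qlb_rule ::
  "(real^'n \<Rightarrow> real) \<Rightarrow> real^'n \<Rightarrow> real^'n \<Rightarrow> (real^'n \<Rightarrow> real^'n \<Rightarrow> ereal) \<Rightarrow> bool" where
  "is_qlb_rule f a b qlb \<longleftrightarrow>
     (\<forall>c d. is_subcube a b c d \<and> fmin f c d = fmin f a b \<longrightarrow> qlb c d \<le> ereal (fmin f c d))"

definition xC :: "real^'n \<Rightarrow> real^'n \<Rightarrow> real^'n \<Rightarrow> real^'n \<Rightarrow> real^'n" where
  "xC a b c d = (\<chi> i. if c$i = a$i then c$i else if d$i = b$i then d$i else (c$i + d$i) / 2)"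

definition bound_val :: "(real^'n \<Rightarrow> real) \<Rightarrow> real \<Rightarrow> real^'n \<Rightarrow> real^'n \<Rightarrow> real^'n \<Rightarrow> real^'n \<Rightarrow> real" where
  "bound_val f L a b c d =
     f (xC a b c d) - L / 2 * (\<Sum>i\<in>UNIV. max (((xC a b c d)$i - c$i)^2) (((xC a b c d)$i - d$i)^2))"

definition qlb_rule3 :: "(real^'n \<Rightarrow> real) \<Rightarrow> real \<Rightarrow> real^'n \<Rightarrow> real^'n \<Rightarrow> real^'n \<Rightarrow> real^'n \<Rightarrow> ereal" where
  "qlb_rule3 f L a b c d =
     (if (\<forall>i. d$i - c$i < b$i - a$i) then ereal (bound_val f L a b c d) else -\<infinity>)"

end

theory Submission
  imports Defs
begin

text \<open>At a minimiser \<open>x\<^sub>*\<close> of \<open>f\<close> over \<open>C\<^sub>0\<close>, each coordinate \<open>x\<^sub>*\<^sub>i\<close> either lies strictly inside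
  \<open>[a\<^sub>i, b\<^sub>i]\<close>, so that \<open>g\<^sub>i(x\<^sub>*) = 0\<close>, or lies on a face of \<open>C\<^sub>0\<close>. A subcube thinner than \<open>C\<^sub>0\<close> in
  every direction touches at most one of the two faces \<open>a\<^sub>i\<close>, \<open>b\<^sub>i\<close>, and \<open>x(C)\<close> is placed on exactly
  that face, so then \<open>x\<^sub>i(C) = x\<^sub>*\<^sub>i\<close>. Hence \<open>g(x\<^sub>*)\<^sup>T(x(C) - x\<^sub>*) = 0\<close>, and the descent lemma for
  \<open>L\<close>-smooth functions at \<open>x\<^sub>*\<close> gives \<open>f(x(C)) \<le> f\<^sub>* + L/2 |x(C) - x\<^sub>*|\<^sup>2\<close>, where the \<open>i\<close>-th
  coordinate of \<open>x(C) - x\<^sub>*\<close> is at most the distance from \<open>x\<^sub>i(C)\<close> to the farther endpoint of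
  \<open>[c\<^sub>i, d\<^sub>i]\<close>.\<close>

lemma has_real_derivative_along_line:
  fixes f :: "'a::real_inner \<Rightarrow> real"
  assumes "(f has_derivative (\<lambda>h. g (x + t *\<^sub>R v) \<bullet> h)) (at (x + t *\<^sub>R v))"
  shows "((\<lambda>s. f (x + s *\<^sub>R v)) has_real_derivative g (x + t *\<^sub>R v) \<bullet> v) (at t)"
proof -
  have "((\<lambda>s. x + s *\<^sub>R v) has_derivative (\<lambda>s. s *\<^sub>R v)) (at t)"
    by (auto intro!: derivative_eq_intros)
  from has_derivative_compose[OF this assms]
  have "((\<lambda>s. f (x + s *\<^sub>R v)) has_derivative (\<lambda>s. g (x + t *\<^sub>R v) \<bullet> (s *\<^sub>R v))) (at t)"
    by (simp add: o_def)
  then show ?thesis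
    unfolding has_field_derivative_def
    by (rule has_derivative_eq_rhs) (simp add: fun_eq_iff inner_scaleR_right)
qed

lemma descent_lemma:
  fixes f :: "'a::real_inner \<Rightarrow> real"
  assumes K: "convex K"
    and deriv: "\<And>z. z \<in> K \<Longrightarrow> (f has_derivative (\<lambda>h. g z \<bullet> h)) (at z)"
    and lip: "\<And>z w. z \<in> K \<Longrightarrow> w \<in> K \<Longrightarrow> norm (g z - g w) \<le> L * norm (z - w)"
    and x: "x \<in> K" and y: "y \<in> K"
  shows "f y \<le> f x + g x \<bullet> (y - x) + L / 2 * norm (y - x)^2"
proof -
  define h where "h = y - x"
  define \<phi> where "\<phi> t = f (x + t *\<^sub>R h) - t * (g x \<bullet> h) - L / 2 * t^2 * norm h^2" for t
  have "\<phi> 1 \<le> \<phi> 0"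
  proof (rule DERIV_nonpos_imp_nonincreasing[of 0 1])
    fix t :: real assume t: "0 \<le> t" "t \<le> 1"
    define z where "z = x + t *\<^sub>R h"
    have "z = (1 - t) *\<^sub>R x + t *\<^sub>R y" unfolding z_def h_def by (simp add: algebra_simps)
    then have z: "z \<in> K" using convexD_alt[OF K x y] t by simp
    have "((\<lambda>s. f (x + s *\<^sub>R h)) has_real_derivative g z \<bullet> h) (at t)"
      using has_real_derivative_along_line[of f g x t h] deriv[OF z] unfolding z_def by simp
    then have "(\<phi> has_real_derivative g z \<bullet> h - g x \<bullet> h - L / 2 * (2 * t) * norm h^2) (at t)"
      unfolding \<phi>_def[abs_def] by (auto intro!: derivative_eq_intros)
    moreover have "g z \<bullet> h - g x \<bullet> h - L / 2 * (2 * t) * norm h^2 \<le> 0"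
    proof -
      have "g z \<bullet> h - g x \<bullet> h = (g z - g x) \<bullet> h" by (simp add: inner_diff_left)
      also have "\<dots> \<le> norm (g z - g x) * norm h" by (rule norm_cauchy_schwarz)
      also have "\<dots> \<le> L * norm (z - x) * norm h" using lip[OF z x] by (simp add: mult_right_mono)
      also have "norm (z - x) = t * norm h" unfolding z_def using t by simp
      finally show ?thesis by (simp add: power2_eq_square algebra_simps)
    qed
    ultimately show "\<exists>D. (\<phi> has_real_derivative D) (at t) \<and> D \<le> 0" by blast
  qed simp
  then show ?thesis unfolding \<phi>_def h_def by simp
qed

lemma gradient_component_eq_0_at_box_minimum:
  fixes f :: "real^'n \<Rightarrow> real"
  assumes deriv: "(f has_derivative (\<lambda>h. g xs \<bullet> h)) (at xs)"
    and xs: "xs \<in> cbox a b" and min: "\<And>y. y \<in> cbox a b \<Longrightarrow> f xs \<le> f y"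
    and i: "a$i < xs$i" "xs$i < b$i"
  shows "g xs $ i = 0"
proof (rule DERIV_local_min)
  define e :: "real^'n" where "e = axis i 1"
  show "((\<lambda>s. f (xs + s *\<^sub>R e)) has_real_derivative g xs $ i) (at 0)"
    using has_real_derivative_along_line[of f g xs 0 e] deriv by (simp add: e_def inner_axis)
  show "0 < min (xs$i - a$i) (b$i - xs$i)" using i by simp
  show "\<forall>s. \<bar>0 - s\<bar> < min (xs$i - a$i) (b$i - xs$i) \<longrightarrow> f (xs + 0 *\<^sub>R e) \<le> f (xs + s *\<^sub>R e)"
  proof (intro allI impI)
    fix s :: real assume "\<bar>0 - s\<bar> < min (xs$i - a$i) (b$i - xs$i)"
    then have "xs + s *\<^sub>R e \<in> cbox a b"
      using xs unfolding mem_box_cart e_def by (auto simp: axis_def)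
    then show "f (xs + 0 *\<^sub>R e) \<le> f (xs + s *\<^sub>R e)" using min by simp
  qed
qed

lemma power2_diff_le_max_endpoints:
  fixes x y c d :: real
  assumes "c \<le> y" "y \<le> d"
  shows "(x - y)^2 \<le> max ((x - c)^2) ((x - d)^2)"
proof (cases "y \<le> x")
  case True
  then have "(x - y)^2 \<le> (x - c)^2" using assms by (intro power_mono) auto
  then show ?thesis by simp
next
  case False
  then have "(y - x)^2 \<le> (d - x)^2" using assms by (intro power_mono) auto
  then show ?thesis by (simp add: power2_commute)
qed

lemma subcube_subset:
  assumes "is_subcube a b c d"
  shows "cbox c d \<subseteq> cbox a b"
  using assms unfolding is_subcube_def subset_iff mem_box_cart by (meson order_trans)

lemma subcube_nonempty:
  assumes "is_subcube a b c d"
  shows "c \<in> cbox c d"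
  using assms unfolding is_subcube_def mem_box_cart by simp

lemma xC_mem_subcube:
  assumes "is_subcube a b c d"
  shows "xC a b c d \<in> cbox c d"
  using assms unfolding is_subcube_def xC_def mem_box_cart by (auto intro: order_trans)

lemma fmin_attained:
  assumes "continuous_on (cbox c d) f" and "cbox c d \<noteq> {}"
  obtains m where "m \<in> cbox c d" "fmin f c d = f m" "\<And>y. y \<in> cbox c d \<Longrightarrow> f m \<le> f y"
proof -
  obtain m where m: "m \<in> cbox c d" "\<forall>y\<in>cbox c d. f m \<le> f y"
    using continuous_attains_inf[OF compact_cbox assms(2,1)] by blast
  have "fmin f c d = f m"
    unfolding fmin_def by (rule cInf_eq_minimum) (use m in auto)
  with m that show ?thesis by blast
qed

lemma xC_component_eq_or_interior:
  assumes sub: "is_subcube a b c d" and thin: "d$i - c$i < b$i - a$i"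
    and xs: "xs \<in> cbox c d"
  shows "xC a b c d $ i = xs$i \<or> (a$i < xs$i \<and> xs$i < b$i)"
proof -
  have "a$i \<le> c$i" "c$i \<le> xs$i" "xs$i \<le> d$i" "d$i \<le> b$i"
    using sub xs unfolding is_subcube_def mem_box_cart by auto
  then show ?thesis using thin unfolding xC_def by auto
qed

lemma gradient_inner_xC_eq_0:
  fixes f :: "real^'n \<Rightarrow> real"
  assumes deriv: "(f has_derivative (\<lambda>h. g xs \<bullet> h)) (at xs)"
    and min: "\<And>y. y \<in> cbox a b \<Longrightarrow> f xs \<le> f y"
    and sub: "is_subcube a b c d" and thin: "\<forall>i. d$i - c$i < b$i - a$i"
    and xs: "xs \<in> cbox c d"
  shows "g xs \<bullet> (xC a b c d - xs) = 0"
proof -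
  have xs_ab: "xs \<in> cbox a b" using subcube_subset[OF sub] xs by blast
  have "g xs $ i * (xC a b c d - xs) $ i = 0" for i
    using xC_component_eq_or_interior[OF sub thin[rule_format] xs, of i]
      gradient_component_eq_0_at_box_minimum[of f g xs, OF deriv xs_ab min]
    by auto
  then show ?thesis unfolding inner_vec_def inner_real_def by (simp add: sum.neutral)
qed

lemma norm_diff_power2_le_sum_max:
  fixes x y :: "real^'n"
  assumes "y \<in> cbox c d"
  shows "norm (x - y)^2 \<le> (\<Sum>i\<in>UNIV. max ((x$i - c$i)^2) ((x$i - d$i)^2))"
proof -
  have "norm (x - y)^2 = (\<Sum>i\<in>UNIV. (x$i - y$i)^2)"
    unfolding power2_norm_eq_inner inner_vec_def by (simp add: power2_eq_square)
  also have "\<dots> \<le> (\<Sum>i\<in>UNIV. max ((x$i - c$i)^2) ((x$i - d$i)^2))"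
    using assms unfolding mem_box_cart by (intro sum_mono power2_diff_le_max_endpoints) auto
  finally show ?thesis .
qed

lemma bound_val_le_minimum:
  fixes f :: "real^'n \<Rightarrow> real"
  assumes deriv: "\<And>z. z \<in> cbox a b \<Longrightarrow> (f has_derivative (\<lambda>h. g z \<bullet> h)) (at z)"
    and lip: "\<And>z w. z \<in> cbox a b \<Longrightarrow> w \<in> cbox a b \<Longrightarrow> norm (g z - g w) \<le> L * norm (z - w)"
    and L: "L \<ge> 0"
    and min: "\<And>y. y \<in> cbox a b \<Longrightarrow> f xs \<le> f y"
    and sub: "is_subcube a b c d" and thin: "\<forall>i. d$i - c$i < b$i - a$i"
    and xs: "xs \<in> cbox c d"
  shows "bound_val f L a b c d \<le> f xs"
proof -
  define x where "x = xC a b c d"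
  have xs_ab: "xs \<in> cbox a b" and x_ab: "x \<in> cbox a b"
    using subcube_subset[OF sub] xs xC_mem_subcube[OF sub] unfolding x_def by blast+
  have "f x \<le> f xs + g xs \<bullet> (x - xs) + L / 2 * norm (x - xs)^2"
    by (rule descent_lemma[OF convex_box(1) deriv lip xs_ab x_ab])
  also have "g xs \<bullet> (x - xs) = 0"
    unfolding x_def by (rule gradient_inner_xC_eq_0[of f g xs, OF deriv[OF xs_ab] min sub thin xs])
  also have "L / 2 * norm (x - xs)^2 \<le> L / 2 * (\<Sum>i\<in>UNIV. max ((x$i - c$i)^2) ((x$i - d$i)^2))"
    using L norm_diff_power2_le_sum_max[OF xs] by (intro mult_left_mono) auto
  finally show ?thesis unfolding bound_val_def x_def by simp
qed

theorem mainTheorem3: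
  fixes f :: "real^'n \<Rightarrow> real" and g :: "real^'n \<Rightarrow> real^'n"
    and a b :: "real^'n" and L :: real
  assumes ab: "\<forall>i. a$i \<le> b$i"
    and C1: "\<exists>S. open S \<and> cbox a b \<subseteq> S \<and>
                 (\<forall>x\<in>S. (f has_derivative (\<lambda>h. g x \<bullet> h)) (at x))"
    and L: "L \<ge> 0"
    and lip: "\<forall>x\<in>cbox a b. \<forall>y\<in>cbox a b. norm (g x - g y) \<le> L * norm (x - y)"
  shows "(\<forall>c d xs. is_subcube a b c d \<and> (\<forall>i. d$i - c$i < b$i - a$i) \<and>
              xs \<in> cbox c d \<and> f xs = fmin f a b \<longrightarrow>
              g xs \<bullet> (xC a b c d - xs) = 0 \<and> fmin f a b \<ge> bound_val f L a b c d)
         \<and> is_qlb_rule f a b (qlb_rule3 f L a b)"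
proof -
  have deriv: "\<And>z. z \<in> cbox a b \<Longrightarrow> (f has_derivative (\<lambda>h. g z \<bullet> h)) (at z)"
    using C1 by blast
  have lip': "\<And>z w. z \<in> cbox a b \<Longrightarrow> w \<in> cbox a b \<Longrightarrow> norm (g z - g w) \<le> L * norm (z - w)"
    using lip by blast
  have cont: "continuous_on (cbox a b) f"
    using deriv by (meson continuous_at_imp_continuous_on has_derivative_continuous)
  have sub_ab: "is_subcube a b a b" using ab unfolding is_subcube_def by auto
  obtain m where m_min: "fmin f a b = f m" "\<And>y. y \<in> cbox a b \<Longrightarrow> f m \<le> f y"
    using fmin_attained[OF cont] subcube_nonempty[OF sub_ab] by blast
  have claim: "g xs \<bullet> (xC a b c d - xs) = 0 \<and> bound_val f L a b c d \<le> fmin f a b"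
    if sub: "is_subcube a b c d" and thin: "\<forall>i. d$i - c$i < b$i - a$i"
      and xs: "xs \<in> cbox c d" and fxs: "f xs = fmin f a b"
    for c d xs
  proof -
    have xs_min: "\<And>y. y \<in> cbox a b \<Longrightarrow> f xs \<le> f y" using fxs m_min by simp
    have "xs \<in> cbox a b" using subcube_subset[OF sub] xs by blast
    then show ?thesis
      using gradient_inner_xC_eq_0[of f g xs, OF deriv xs_min sub thin xs]
        bound_val_le_minimum[OF deriv lip' L xs_min sub thin xs] fxs by simp
  qed
  have "qlb_rule3 f L a b c d \<le> ereal (fmin f c d)"
    if sub: "is_subcube a b c d" and eq: "fmin f c d = fmin f a b" for c d
  proof -
    obtain xs where "xs \<in> cbox c d" "fmin f c d = f xs"
      using fmin_attained[OF continuous_on_subset[OF cont subcube_subset[OF sub]]]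
        subcube_nonempty[OF sub] by blast
    then show ?thesis using claim[OF sub] eq unfolding qlb_rule3_def by auto
  qed
  then show ?thesis using claim unfolding is_qlb_rule_def by blast
qed

end
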